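(* A TEFX allocation need not exist, for goods or for chores, even when there are $n=2$ agents with identical valuations and only two types of items. That is, there exists an instance with two agents, identical additive valuations, all items goods, items of two types, and no TEFX allocation; and likewise such an instance with all items chores.
   Context: Items $o_1,\dots,o_m$ arrive one per round in this order; agents have additive valuations; in the goods case $v_i(o)\ge 0$, in the chores case $v_i(o)\le 0$ for all agents and items. An allocation $\mathcal{A}=(A_1,\dots,A_n)$ partitions the items; $\mathcal{A}^t$ is its restriction to $o_1,\dots,o_t$. An allocation $(B_1,\dots,B_n)$ is EFX if for all $i,j$ and every good $g\in B_j$, $v_i(B_i)\ge v_i(B_j\setminus\{g\})$ (goods), resp. for every chore $c\in B_i$, $v_i(B_i\setminus\{c\})\ge v_i(B_j)$ (chores). $\mathcal{A}$ is TEFX if $\mathcal{A}^t$ is EFX for every $t$. "Two types of items" means the items can be partitioned into two sets $S_1,S_2$ such that every agent values all items within the same set equally. *)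

theory Defs
  imports Complex_Main
begin

(* Agents are 0..<n, items are 0..<m, item x arrives in round o+1.
   V i x is agent i (additive) value for item o.
   An allocation is a map A from items to agents. *)

definition allocation :: "nat \<Rightarrow> nat \<Rightarrow> (nat \<Rightarrow> nat) \<Rightarrow> bool" where
  "allocation n m A \<longleftrightarrow> (\<forall>x<m. A x < n)"

definition bundle_at :: "(nat \<Rightarrow> nat) \<Rightarrow> nat \<Rightarrow> nat \<Rightarrow> nat set" where
  "bundle_at A t i = {x. x < t \<and> A x = i}"

definition val :: "(nat \<Rightarrow> nat \<Rightarrow> real) \<Rightarrow> nat \<Rightarrow> nat set \<Rightarrow> real" where
  "val V i S = (\<Sum>x\<in>S. V i x)"

definition EFX_goods :: "nat \<Rightarrow> (nat \<Rightarrow> nat \<Rightarrow> real) \<Rightarrow> (nat \<Rightarrow> nat set) \<Rightarrow> bool" where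
  "EFX_goods n V B \<longleftrightarrow>
     (\<forall>i<n. \<forall>j<n. \<forall>g\<in>B j. val V i (B i) \<ge> val V i (B j - {g}))"

definition EFX_chores :: "nat \<Rightarrow> (nat \<Rightarrow> nat \<Rightarrow> real) \<Rightarrow> (nat \<Rightarrow> nat set) \<Rightarrow> bool" where
  "EFX_chores n V B \<longleftrightarrow>
     (\<forall>i<n. \<forall>j<n. \<forall>c\<in>B i. val V i (B i - {c}) \<ge> val V i (B j))"

definition TEFX_goods :: "nat \<Rightarrow> nat \<Rightarrow> (nat \<Rightarrow> nat \<Rightarrow> real) \<Rightarrow> (nat \<Rightarrow> nat) \<Rightarrow> bool" where
  "TEFX_goods n m V A \<longleftrightarrow> allocation n m A \<and> (\<forall>t\<le>m. EFX_goods n V (bundle_at A t))"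

definition TEFX_chores :: "nat \<Rightarrow> nat \<Rightarrow> (nat \<Rightarrow> nat \<Rightarrow> real) \<Rightarrow> (nat \<Rightarrow> nat) \<Rightarrow> bool" where
  "TEFX_chores n m V A \<longleftrightarrow> allocation n m A \<and> (\<forall>t\<le>m. EFX_chores n V (bundle_at A t))"

definition goods_instance :: "nat \<Rightarrow> nat \<Rightarrow> (nat \<Rightarrow> nat \<Rightarrow> real) \<Rightarrow> bool" where
  "goods_instance n m V \<longleftrightarrow> (\<forall>i<n. \<forall>x<m. V i x \<ge> 0)"

definition chores_instance :: "nat \<Rightarrow> nat \<Rightarrow> (nat \<Rightarrow> nat \<Rightarrow> real) \<Rightarrow> bool" where
  "chores_instance n m V \<longleftrightarrow> (\<forall>i<n. \<forall>x<m. V i x \<le> 0)"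

definition identical_valuations :: "nat \<Rightarrow> nat \<Rightarrow> (nat \<Rightarrow> nat \<Rightarrow> real) \<Rightarrow> bool" where
  "identical_valuations n m V \<longleftrightarrow> (\<forall>i<n. \<forall>j<n. \<forall>x<m. V i x = V j x)"

definition two_types :: "nat \<Rightarrow> nat \<Rightarrow> (nat \<Rightarrow> nat \<Rightarrow> real) \<Rightarrow> bool" where
  "two_types n m V \<longleftrightarrow> (\<exists>S1 S2. S1 \<union> S2 = {..<m} \<and> S1 \<inter> S2 = {} \<and> S1 \<noteq> {} \<and> S2 \<noteq> {} \<and>
     (\<forall>i<n. (\<forall>a\<in>S1. \<forall>b\<in>S1. V i a = V i b) \<and> (\<forall>a\<in>S2. \<forall>b\<in>S2. V i a = V i b)))"

end

theory Submission
  imports Defs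
begin

text \<open>Goods of values 1, 1, 2 arrive in this order. After two rounds EFX forces the two unit goods
  to different agents, since otherwise the agent with the empty bundle envies the other one even
  after a unit good is removed. Whoever then receives the good of value 2 holds a unit good and
  the big one, and the other agent, who only has value 1, still envies that bundle after the unit
  good is removed. For chores of values -1, -1, -2 the same two rounds fail, the envious agent
  now being the holder of the big chore.\<close>

definition goods_112 :: "nat \<Rightarrow> nat \<Rightarrow> real" where
  "goods_112 i x = (if x = 2 then 2 else 1)"

definition chores_112 :: "nat \<Rightarrow> nat \<Rightarrow> real" where
  "chores_112 i x = (if x = 2 then -2 else -1)"

lemma nat_less_2_iff: "(x::nat) < 2 \<longleftrightarrow> x = 0 \<or> x = 1"
  by auto

lemma nat_less_3_iff: "(x::nat) < 3 \<longleftrightarrow> x = 0 \<or> x = 1 \<or> x = 2"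
  by auto

lemma ex_other_of_two: "\<exists>j<2. j \<noteq> (i::nat)"
  by (rule exI[of _ "if i = 0 then 1 else 0"]) auto

lemma bundles_at_2_same:
  assumes "A 1 = A 0" "j \<noteq> A 0"
  shows "bundle_at A 2 (A 0) = {0, 1}" "bundle_at A 2 j = {}"
  using assms unfolding bundle_at_def nat_less_2_iff by fastforce+

lemma bundles_at_3_split:
  assumes "A 1 \<noteq> A 0" "A 0 < 2" "A 1 < 2" "A 2 < 2" "j < 2" "j \<noteq> A 2"
  obtains g h where "bundle_at A 3 (A 2) = {g, 2}" "bundle_at A 3 j = {h}" "g < 2" "h < 2"
proof (cases "A 0 = A 2")
  case True
  with assms have "bundle_at A 3 (A 2) = {0, 2}" "bundle_at A 3 j = {1}"
    by (auto simp: bundle_at_def nat_less_3_iff nat_less_2_iff)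
  then show ?thesis by (rule that) simp_all
next
  case False
  with assms have "bundle_at A 3 (A 2) = {1, 2}" "bundle_at A 3 j = {0}"
    by (auto simp: bundle_at_def nat_less_3_iff nat_less_2_iff)
  then show ?thesis by (rule that) simp_all
qed

lemma EFX_goods_112_separates_unit_goods:
  assumes EFX: "EFX_goods 2 goods_112 (bundle_at A 2)" and "A 0 < 2"
  shows "A 1 \<noteq> A 0"
proof
  assume "A 1 = A 0"
  obtain j where "j < 2" "j \<noteq> A 0"
    using ex_other_of_two by blast
  note bundles = bundles_at_2_same[OF \<open>A 1 = A 0\<close> \<open>j \<noteq> A 0\<close>]
  have "val goods_112 j (bundle_at A 2 j) < val goods_112 j (bundle_at A 2 (A 0) - {0})"
    unfolding bundles by (simp add: val_def goods_112_def)
  moreover have "0 \<in> bundle_at A 2 (A 0)"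
    unfolding bundles by simp
  ultimately show False
    using EFX \<open>j < 2\<close> \<open>A 0 < 2\<close> unfolding EFX_goods_def by (meson not_le)
qed

lemma EFX_goods_112_fails_at_3:
  assumes "A 1 \<noteq> A 0" "A 0 < 2" "A 1 < 2" "A 2 < 2"
  shows "\<not> EFX_goods 2 goods_112 (bundle_at A 3)"
proof
  assume EFX: "EFX_goods 2 goods_112 (bundle_at A 3)"
  obtain j where "j < 2" "j \<noteq> A 2"
    using ex_other_of_two by blast
  then obtain g h where bundles: "bundle_at A 3 (A 2) = {g, 2}" "bundle_at A 3 j = {h}"
    and "g < 2" "h < 2"
    using bundles_at_3_split assms by metis
  have "val goods_112 j (bundle_at A 3 j) < val goods_112 j (bundle_at A 3 (A 2) - {g})"
    unfolding bundles using \<open>g < 2\<close> \<open>h < 2\<close> by (simp add: val_def goods_112_def)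
  moreover have "g \<in> bundle_at A 3 (A 2)"
    unfolding bundles by simp
  ultimately show False
    using EFX \<open>j < 2\<close> \<open>A 2 < 2\<close> unfolding EFX_goods_def by (meson not_le)
qed

lemma EFX_chores_112_separates_unit_chores:
  assumes EFX: "EFX_chores 2 chores_112 (bundle_at A 2)" and "A 0 < 2"
  shows "A 1 \<noteq> A 0"
proof
  assume "A 1 = A 0"
  obtain j where "j < 2" "j \<noteq> A 0"
    using ex_other_of_two by blast
  note bundles = bundles_at_2_same[OF \<open>A 1 = A 0\<close> \<open>j \<noteq> A 0\<close>]
  have "val chores_112 (A 0) (bundle_at A 2 (A 0) - {0}) < val chores_112 (A 0) (bundle_at A 2 j)"
    unfolding bundles by (simp add: val_def chores_112_def)
  moreover have "0 \<in> bundle_at A 2 (A 0)"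
    unfolding bundles by simp
  ultimately show False
    using EFX \<open>j < 2\<close> \<open>A 0 < 2\<close> unfolding EFX_chores_def by (meson not_le)
qed

lemma EFX_chores_112_fails_at_3:
  assumes "A 1 \<noteq> A 0" "A 0 < 2" "A 1 < 2" "A 2 < 2"
  shows "\<not> EFX_chores 2 chores_112 (bundle_at A 3)"
proof
  assume EFX: "EFX_chores 2 chores_112 (bundle_at A 3)"
  obtain j where "j < 2" "j \<noteq> A 2"
    using ex_other_of_two by blast
  then obtain g h where bundles: "bundle_at A 3 (A 2) = {g, 2}" "bundle_at A 3 j = {h}"
    and "g < 2" "h < 2"
    using bundles_at_3_split assms by metis
  have "val chores_112 (A 2) (bundle_at A 3 (A 2) - {g}) < val chores_112 (A 2) (bundle_at A 3 j)"
    unfolding bundles using \<open>g < 2\<close> \<open>h < 2\<close> by (simp add: val_def chores_112_def)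
  moreover have "g \<in> bundle_at A 3 (A 2)"
    unfolding bundles by simp
  ultimately show False
    using EFX \<open>j < 2\<close> \<open>A 2 < 2\<close> unfolding EFX_chores_def by (meson not_le)
qed

lemma not_TEFX_goods_112: "\<not> TEFX_goods 2 3 goods_112 A"
proof
  assume "TEFX_goods 2 3 goods_112 A"
  then have "A 0 < 2" "A 1 < 2" "A 2 < 2"
    and "EFX_goods 2 goods_112 (bundle_at A 2)" "EFX_goods 2 goods_112 (bundle_at A 3)"
    by (auto simp: TEFX_goods_def allocation_def)
  then show False
    using EFX_goods_112_separates_unit_goods EFX_goods_112_fails_at_3 by blast
qed

lemma not_TEFX_chores_112: "\<not> TEFX_chores 2 3 chores_112 A"
proof
  assume "TEFX_chores 2 3 chores_112 A"
  then have "A 0 < 2" "A 1 < 2" "A 2 < 2"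
    and "EFX_chores 2 chores_112 (bundle_at A 2)" "EFX_chores 2 chores_112 (bundle_at A 3)"
    by (auto simp: TEFX_chores_def allocation_def)
  then show False
    using EFX_chores_112_separates_unit_chores EFX_chores_112_fails_at_3 by blast
qed

lemma two_types_3_if_first_items_equal:
  assumes "\<And>i. V i 0 = V i 1"
  shows "two_types n 3 V"
  unfolding two_types_def
  by (rule exI[of _ "{0, 1}"], rule exI[of _ "{2}"]) (auto simp: assms)

theorem proposition1:
  shows "(\<exists>m V. goods_instance 2 m V \<and> identical_valuations 2 m V \<and> two_types 2 m V \<and>
            \<not> (\<exists>A. TEFX_goods 2 m V A))
       \<and> (\<exists>m V. chores_instance 2 m V \<and> identical_valuations 2 m V \<and> two_types 2 m V \<and>
            \<not> (\<exists>A. TEFX_chores 2 m V A))"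
proof
  have "goods_instance 2 3 goods_112" "identical_valuations 2 3 goods_112"
    "two_types 2 3 goods_112"
    by (auto simp: goods_instance_def identical_valuations_def goods_112_def
        intro: two_types_3_if_first_items_equal)
  with not_TEFX_goods_112
  show "\<exists>m V. goods_instance 2 m V \<and> identical_valuations 2 m V \<and> two_types 2 m V \<and>
            \<not> (\<exists>A. TEFX_goods 2 m V A)"
    by blast
  have "chores_instance 2 3 chores_112" "identical_valuations 2 3 chores_112"
    "two_types 2 3 chores_112"
    by (auto simp: chores_instance_def identical_valuations_def chores_112_def
        intro: two_types_3_if_first_items_equal)
  with not_TEFX_chores_112
  show "\<exists>m V. chores_instance 2 m V \<and> identical_valuations 2 m V \<and> two_types 2 m V \<and>
            \<not> (\<exists>A. TEFX_chores 2 m V A)"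
    by blast
qed

end
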